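(* Let $\mathbf{u}$ be quasi-definite with SMOP $(P_n)$ satisfying $xP_n=P_{n+1}+b_nP_n+a_nP_{n-1}$, and suppose $\mathbf{u}^{-1}$ is quasi-definite with SMOP $(P^-_n)$. Let $J^{(1)}$ and $J^-$ be the monic Jacobi matrices of $\mathbf{u}^{(1)}$ and $\mathbf{u}^{-1}$. Define $\alpha_{1,0}=b_0+b_1$ and, for $n\ge2$, $$\alpha_{n,n-1}=-\frac{W(P_{n+1},P_{n-1})(0)}{W(P_n,P_{n-1})(0)},\qquad \alpha_{n,n-2}=\frac{W(P_{n+1},P_n)(0)}{W(P_n,P_{n-1})(0)},$$ and for $n\ge0$ $$\beta_{n,n}=\frac{W(P^-_{n+1},P^-_{n+2})(0)}{W(P^-_n,P^-_{n+1})(0)},\qquad \beta_{n,n+1}=-\frac{W(P^-_n,P^-_{n+2})(0)}{W(P^-_n,P^-_{n+1})(0)}$$ (all denominators are nonzero). Let $L$ be the lower triangular matrix with $L_{n,n}=1$, $L_{n,n-1}=\alpha_{n,n-1}$, $L_{n,n-2}=\alpha_{n,n-2}$, other entries $0$, and $U$ the upper triangular matrix with $U_{n,n}=\beta_{n,n}$, $U_{n,n+1}=\beta_{n,n+1}$, $U_{n,n+2}=1$, other entries $0$. Then $P^-_n=P^{(1)}_n+\alpha_{n,n-1}P^{(1)}_{n-1}+\alpha_{n,n-2}P^{(1)}_{n-2}$, $x^2P^{(1)}_n=P^-_{n+2}+\beta_{n,n+1}P^-_{n+1}+\beta_{n,n}P^-_n$, and $$\big(J^{(1)}\big)^2=UL,\qquad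 \big(J^-\big)^2=LU.$$
   Context: Linear functionals on complex polynomials, moments $\mathbf{u}_n$; the inverse $\mathbf{u}^{-1}$ is the functional with $\sum_{k=0}^n\mathbf{u}_k(\mathbf{u}^{-1})_{n-k}=\delta_{n,0}$. Quasi-definite: all leading principal Hankel minors of the moments nonzero; then a unique sequence of monic orthogonal polynomials (SMOP) exists with $xP_n=P_{n+1}+b_nP_n+a_nP_{n-1}$, $P_{-1}=0$, $P_0=1$, $a_n\ne0$. $\mathbf{u}^{(1)}$ denotes a (quasi-definite) functional whose SMOP is the sequence of associated polynomials of the first kind: monic, $xP^{(1)}_n=P^{(1)}_{n+1}+b_{n+1}P^{(1)}_n+a_{n+1}P^{(1)}_{n-1}$, $P^{(1)}_{-1}=0$, $P^{(1)}_0=1$ (with convention $P^{(1)}_{-1}=0$ in the expansions). The monic Jacobi matrix of a functional is the tridiagonal matrix with diagonal $(b_0,b_1,\dots)$, superdiagonal $1$'s and subdiagonal $(a_1,a_2,\dots)$ of its SMOP recurrence. Wronskian $W(p,q)(x)=p(x)q'(x)-p'(x)q(x)$. *)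

theory Defs
  imports "Jordan_Normal_Form.Determinant" "HOL-Computational_Algebra.Polynomial"
begin

text \<open>A linear functional on complex polynomials is represented by its moment
  sequence m; its action on a polynomial p is the following.\<close>
definition lin_fun :: "(nat \<Rightarrow> complex) \<Rightarrow> complex poly \<Rightarrow> complex" where
  "lin_fun m p = (\<Sum>k\<le>degree p. coeff p k * m k)"

definition inv_moments :: "(nat \<Rightarrow> complex) \<Rightarrow> nat \<Rightarrow> complex" where
  "inv_moments m = (THE v. \<forall>n. (\<Sum>k\<le>n. m k * v (n - k)) = (if n = 0 then 1 else 0))"

definition quasi_definite :: "(nat \<Rightarrow> complex) \<Rightarrow> bool" where
  "quasi_definite m \<longleftrightarrow>
     (\<forall>n. det (mat (Suc n) (Suc n) (\<lambda>(i, j). m (i + j))) \<noteq> 0)"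

definition is_SMOP :: "(nat \<Rightarrow> complex) \<Rightarrow> (nat \<Rightarrow> complex poly) \<Rightarrow> bool" where
  "is_SMOP m P \<longleftrightarrow>
     (\<forall>n. degree (P n) = n \<and> lead_coeff (P n) = 1) \<and>
     (\<forall>n k. n \<noteq> k \<longrightarrow> lin_fun m (P n * P k) = 0) \<and>
     (\<forall>n. lin_fun m (P n * P n) \<noteq> 0)"

definition three_term :: "(nat \<Rightarrow> complex poly) \<Rightarrow> (nat \<Rightarrow> complex) \<Rightarrow> (nat \<Rightarrow> complex) \<Rightarrow> bool" where
  "three_term Q aa bb \<longleftrightarrow>
     [:0, 1:] * Q 0 = Q 1 + smult (bb 0) (Q 0) \<and>
     (\<forall>n. [:0, 1:] * Q (Suc n) = Q (Suc (Suc n)) + smult (bb (Suc n)) (Q (Suc n))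
                                    + smult (aa (Suc n)) (Q n))"

fun assoc1 :: "(nat \<Rightarrow> complex) \<Rightarrow> (nat \<Rightarrow> complex) \<Rightarrow> nat \<Rightarrow> complex poly" where
  "assoc1 a b 0 = 1"
| "assoc1 a b (Suc 0) = [:- b 1, 1:]"
| "assoc1 a b (Suc (Suc n)) =
     [:- b (Suc (Suc n)), 1:] * assoc1 a b (Suc n) - smult (a (Suc (Suc n))) (assoc1 a b n)"

type_synonym inf_mat = "nat \<Rightarrow> nat \<Rightarrow> complex"

definition monic_jacobi :: "(nat \<Rightarrow> complex) \<Rightarrow> (nat \<Rightarrow> complex) \<Rightarrow> inf_mat" where
  "monic_jacobi aa bb i j =
     (if j = i then bb i else if j = Suc i then 1 else if i = Suc j then aa i else 0)"

text \<open>Matrix product; it is the usual product for row-finite A (every matrix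
  used below is banded).\<close>
definition inf_mat_mult :: "inf_mat \<Rightarrow> inf_mat \<Rightarrow> inf_mat" where
  "inf_mat_mult A B i j = (\<Sum>k | A i k \<noteq> 0. A i k * B k j)"

definition wronskian :: "complex poly \<Rightarrow> complex poly \<Rightarrow> complex poly" where
  "wronskian p q = p * pderiv q - pderiv p * q"

definition W0 :: "complex poly \<Rightarrow> complex poly \<Rightarrow> complex" where
  "W0 p q = poly (wronskian p q) 0"

definition alpha1 :: "(nat \<Rightarrow> complex poly) \<Rightarrow> (nat \<Rightarrow> complex) \<Rightarrow> nat \<Rightarrow> complex" where
  "alpha1 P b n = (if n = 1 then b 0 + b 1
     else - W0 (P (n + 1)) (P (n - 1)) / W0 (P n) (P (n - 1)))"

definition alpha2 :: "(nat \<Rightarrow> complex poly) \<Rightarrow> nat \<Rightarrow> complex" where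
  "alpha2 P n = W0 (P (n + 1)) (P n) / W0 (P n) (P (n - 1))"

definition beta0 :: "(nat \<Rightarrow> complex poly) \<Rightarrow> nat \<Rightarrow> complex" where
  "beta0 Pm n = W0 (Pm (n + 1)) (Pm (n + 2)) / W0 (Pm n) (Pm (n + 1))"

definition beta1 :: "(nat \<Rightarrow> complex poly) \<Rightarrow> nat \<Rightarrow> complex" where
  "beta1 Pm n = - W0 (Pm n) (Pm (n + 2)) / W0 (Pm n) (Pm (n + 1))"

definition Lmat :: "(nat \<Rightarrow> complex poly) \<Rightarrow> (nat \<Rightarrow> complex) \<Rightarrow> inf_mat" where
  "Lmat P b i j = (if j = i then 1 else if Suc j = i then alpha1 P b i
      else if Suc (Suc j) = i then alpha2 P i else 0)"

definition Umat :: "(nat \<Rightarrow> complex poly) \<Rightarrow> inf_mat" where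
  "Umat Pm i j = (if j = i then beta0 Pm i else if j = Suc i then beta1 Pm i
      else if j = Suc (Suc i) then 1 else 0)"

end

theory Submission
  imports Defs "HOL-Computational_Algebra.Formal_Power_Series"
begin

(* Let v be the moments of u^{-1} and w k = v (k + 2) those of x^2 u^{-1}.  Indexed as
   P^{(1)}_{n-1}, the associated polynomials solve the recurrence of P_n with initial values 0
   and 1, and induction along this recurrence expresses u_0 w(x^j P^{(1)}_{n-1}) as u applied
   to P_n times a polynomial of degree j + 1.  By orthogonality of P_n this vanishes for j < n - 1 but not for
   j = n - 1, so P^{(1)} is the SMOP of x^2 u^{-1}; the same induction identifies u_0 v(P^{(1)}_n)
   and u_0 v(x P^{(1)}_n) with the linear and constant coefficients of P_{n+1}.
   Hence P^-_n and x^2 P^{(1)}_n are orthogonal to all but their top three basis polynomials, so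
   each is a three-term combination whose two free coefficients are fixed by orthogonality to 1
   and x (resp. by the vanishing constant and linear coefficients): a 2 x 2 system solved by
   Cramer's rule with Wronskians at 0 as determinants.  These are nonzero, since otherwise a
   nonzero combination of two consecutive basis polynomials would be orthogonal to everything of
   lower degree.  Finally J^{(1)}, L and U encode multiplication by x, the change of basis from
   P^{(1)} to P^- and the expansion of x^2 P^{(1)} in P^-, so comparing coefficients in a monic
   basis gives (J^{(1)})^2 = UL and (J^-)^2 = LU. *)

section \<open>Linear functionals on polynomials\<close>

lemma lin_fun_eq_sum:
  assumes "\<forall>k\<ge>N. coeff p k = 0"
  shows "lin_fun m p = (\<Sum>k<N. coeff p k * m k)"
proof -
  have "degree p < N \<or> p = 0"
    using assms by (metis coeff_0 le_degree leading_coeff_0_iff not_le)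
  then show ?thesis
  proof
    assume "degree p < N"
    then show ?thesis unfolding lin_fun_def
      by (intro sum.mono_neutral_left) (use assms in \<open>auto simp: coeff_eq_0\<close>)
  qed (simp add: lin_fun_def)
qed

lemma lin_fun_0 [simp]: "lin_fun m 0 = 0"
  by (simp add: lin_fun_def)

lemma lin_fun_const [simp]: "lin_fun m [:c:] = c * m 0"
  by (simp add: lin_fun_def)

lemma lin_fun_one [simp]: "lin_fun m 1 = m 0"
  by (simp add: lin_fun_def)

lemma lin_fun_add: "lin_fun m (p + q) = lin_fun m p + lin_fun m q"
proof -
  define N where "N = Suc (degree p + degree q)"
  have "\<forall>k\<ge>N. coeff p k = 0" "\<forall>k\<ge>N. coeff q k = 0"
    unfolding N_def by (auto intro!: coeff_eq_0)
  moreover from this have "\<forall>k\<ge>N. coeff (p + q) k = 0" by simp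
  ultimately show ?thesis by (simp add: lin_fun_eq_sum[of N] sum.distrib distrib_right)
qed

lemma lin_fun_smult: "lin_fun m (smult c p) = c * lin_fun m p"
proof -
  define N where "N = Suc (degree p)"
  have "\<forall>k\<ge>N. coeff p k = 0" "\<forall>k\<ge>N. coeff (smult c p) k = 0"
    unfolding N_def by (auto intro!: coeff_eq_0)
  then show ?thesis by (simp add: lin_fun_eq_sum[of N] sum_distrib_left mult.assoc)
qed

lemma lin_fun_diff: "lin_fun m (p - q) = lin_fun m p - lin_fun m q"
  using lin_fun_add[of m "p - q" q] by simp

lemma lin_fun_sum: "lin_fun m (\<Sum>x\<in>A. f x) = (\<Sum>x\<in>A. lin_fun m (f x))"
  by (induction A rule: infinite_finite_induct) (simp_all add: lin_fun_add)

lemma lin_fun_monom: "lin_fun m (monom c j) = c * m j"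
  using lin_fun_eq_sum[of "Suc j" "monom c j" m] by (simp add: coeff_monom)

lemma lin_fun_linear: "lin_fun m [:c, d:] = c * m 0 + d * m (Suc 0)"
  using lin_fun_eq_sum[of 2 "[:c, d:]" m] by (auto simp: coeff_pCons numeral_eq_Suc split: nat.split)

lemma lin_fun_pCons_0: "lin_fun m (pCons 0 p) = lin_fun (\<lambda>k. m (Suc k)) p"
proof -
  define N where "N = Suc (degree p)"
  have p: "\<forall>k\<ge>N. coeff p k = 0" unfolding N_def by (auto intro!: coeff_eq_0)
  then have "\<forall>k\<ge>Suc N. coeff (pCons 0 p) k = 0"
    by (auto simp: coeff_pCons split: nat.splits)
  then have "lin_fun m (pCons 0 p) = (\<Sum>k<Suc N. coeff (pCons 0 p) k * m k)"
    by (rule lin_fun_eq_sum)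
  also have "\<dots> = (\<Sum>k<N. coeff p k * m (Suc k))"
    by (simp add: sum.lessThan_Suc_shift del: sum.lessThan_Suc)
  finally show ?thesis by (simp add: lin_fun_eq_sum[OF p])
qed

lemma lin_fun_mult_X: "lin_fun m ([:0, 1:] * p) = lin_fun (\<lambda>k. m (Suc k)) p"
  by (simp add: lin_fun_pCons_0)

lemma monom_Suc_X: "monom (1 :: 'a :: comm_semiring_1) (Suc n) = [:0, 1:] * monom 1 n"
  by (simp add: monom_Suc)

section \<open>Monic bases and orthogonality\<close>

lemma three_term_Suc_Suc:
  assumes "three_term Q aa bb"
  shows "Q (Suc (Suc n))
    = [:0, 1:] * Q (Suc n) - smult (bb (Suc n)) (Q (Suc n)) - smult (aa (Suc n)) (Q n)"
  using assms unfolding three_term_def by (simp add: algebra_simps)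

lemma three_term_1:
  assumes "three_term Q aa bb" "Q 0 = 1"
  shows "Q (Suc 0) = [:- bb 0, 1:]"
proof -
  have "[:0, 1:] = Q (Suc 0) + [:bb 0:]"
    using assms unfolding three_term_def by simp
  then have "Q (Suc 0) = [:0, 1:] - [:bb 0:]" by (simp add: eq_diff_eq)
  then show ?thesis by simp
qed

lemma three_term_assoc1: "three_term (assoc1 a b) (\<lambda>k. a (Suc k)) (\<lambda>k. b (Suc k))"
  by (simp add: three_term_def algebra_simps)

definition monic_basis :: "(nat \<Rightarrow> 'a :: comm_ring_1 poly) \<Rightarrow> bool" where
  "monic_basis Q \<longleftrightarrow> (\<forall>n. coeff (Q n) n = 1 \<and> (\<forall>j>n. coeff (Q n) j = 0))"

lemma is_SMOP_monic_basis: "is_SMOP m Q \<Longrightarrow> monic_basis Q"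
  unfolding is_SMOP_def monic_basis_def by (metis coeff_eq_0)

lemma is_SMOP_0: "is_SMOP m Q \<Longrightarrow> Q 0 = 1"
  unfolding is_SMOP_def by (metis monom_0 monom_eq_1_iff degree_0_id lead_coeff_monom)

lemma three_term_monic_basis:
  assumes rec: "three_term Q aa bb" and Q0: "Q 0 = 1"
  shows "monic_basis Q"
proof -
  have "coeff (Q n) n = 1 \<and> (\<forall>j>n. coeff (Q n) j = 0)" for n
  proof (induction n rule: induct_nat_012)
    case 0
    show ?case using Q0 by simp
  next
    case 1
    show ?case using three_term_1[OF rec Q0] by (simp add: coeff_pCons split: nat.split)
  next
    case (ge2 n)
    have c: "coeff (Q (Suc (Suc n))) (Suc j) = coeff (Q (Suc n)) j
        - bb (Suc n) * coeff (Q (Suc n)) (Suc j) - aa (Suc n) * coeff (Q n) (Suc j)" for j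
      by (subst three_term_Suc_Suc[OF rec]) simp
    have "coeff (Q (Suc (Suc n))) j = 0" if "Suc (Suc n) < j" for j
      using that ge2 c[of "j - 1"] by (cases j) auto
    then show ?case using ge2 c[of "Suc n"] by simp
  qed
  then show ?thesis unfolding monic_basis_def by blast
qed

lemma monic_basis_span:
  assumes "monic_basis Q" "\<forall>j\<ge>N. coeff p j = 0"
  shows "\<exists>c. p = (\<Sum>k<N. smult (c k) (Q k))"
  using assms(2)
proof (induction N arbitrary: p)
  case 0
  then have "p = 0" by (simp add: poly_eq_iff)
  then show ?case by simp
next
  case (Suc N)
  define p' where "p' = p - smult (coeff p N) (Q N)"
  have "\<forall>j\<ge>N. coeff p' j = 0"
  proof (intro allI impI)
    fix j assume "N \<le> j"
    then consider "j = N" | "j \<ge> Suc N" by linarith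
    then show "coeff p' j = 0"
      using Suc.prems assms(1) unfolding p'_def monic_basis_def by cases auto
  qed
  from Suc.IH[OF this] obtain c where c: "p' = (\<Sum>k<N. smult (c k) (Q k))" by blast
  have "(\<Sum>k<N. smult ((c(N := coeff p N)) k) (Q k)) = p'"
    unfolding c by (rule sum.cong) auto
  then have "p = (\<Sum>k<Suc N. smult ((c(N := coeff p N)) k) (Q k))"
    unfolding p'_def by simp
  then show ?case by blast
qed

lemma monic_basis_coeffs_unique:
  assumes Q: "monic_basis Q"
    and eq: "(\<Sum>k<N. smult (c k) (Q k)) = (\<Sum>k<N. smult (d k) (Q k))" and "k < N"
  shows "c k = d k"
  using eq \<open>k < N\<close>
proof (induction N)
  case (Suc N)
  have top: "coeff (\<Sum>k<Suc N. smult (e k) (Q k)) N = e N" for e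
  proof -
    have "(\<Sum>k<N. e k * coeff (Q k) N) = 0"
      using Q unfolding monic_basis_def by (intro sum.neutral) auto
    then show ?thesis using Q unfolding monic_basis_def by (simp add: coeff_sum)
  qed
  have cN: "c N = d N"
    using arg_cong[OF Suc.prems(1), of "\<lambda>p. coeff p N"] unfolding top .
  then have "(\<Sum>k<N. smult (c k) (Q k)) = (\<Sum>k<N. smult (d k) (Q k))"
    using Suc.prems(1) by simp
  then show ?case using Suc.IH cN Suc.prems(2) less_Suc_eq by auto
qed simp

lemma SMOP_orth_lower:
  assumes sm: "is_SMOP m Q" and p: "\<forall>j\<ge>n. coeff p j = 0"
  shows "lin_fun m (Q n * p) = 0"
proof -
  obtain c where c: "p = (\<Sum>k<n. smult (c k) (Q k))"
    using monic_basis_span[OF is_SMOP_monic_basis[OF sm] p] by blast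
  have "lin_fun m (Q n * p) = (\<Sum>k<n. c k * lin_fun m (Q n * Q k))"
    unfolding c by (simp add: sum_distrib_left lin_fun_sum lin_fun_smult)
  also have "\<dots> = 0" using sm unfolding is_SMOP_def by auto
  finally show ?thesis .
qed

lemma SMOP_orth_top:
  assumes sm: "is_SMOP m Q" and p: "\<forall>j>n. coeff p j = 0"
  shows "lin_fun m (Q n * p) = coeff p n * lin_fun m (Q n * Q n)"
proof -
  have "\<forall>j\<ge>n. coeff (p - smult (coeff p n) (Q n)) j = 0"
    using is_SMOP_monic_basis[OF sm] p unfolding monic_basis_def
    by (metis coeff_diff coeff_smult diff_self le_neq_implies_less mult.right_neutral
        mult_zero_right)
  from SMOP_orth_lower[OF sm this] show ?thesis
    by (simp add: right_diff_distrib lin_fun_diff lin_fun_smult)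
qed

lemma lin_fun_mult_eq_0_if_orth_monoms:
  assumes orth: "\<forall>j<n. lin_fun m (R * monom 1 j) = 0" and p: "\<forall>j\<ge>n. coeff p j = 0"
  shows "lin_fun m (R * p) = 0"
proof -
  have "p = (\<Sum>j<n. monom (coeff p j) j)"
  proof (rule poly_eqI)
    fix i
    show "coeff p i = coeff (\<Sum>j<n. monom (coeff p j) j) i"
      by (cases "i < n") (simp_all add: coeff_sum coeff_monom p)
  qed
  then have "R * p = (\<Sum>j<n. smult (coeff p j) (R * monom 1 j))"
    by (metis (no_types, lifting) mult_smult_right smult_monom mult.right_neutral sum.cong
        sum_distrib_left)
  then show ?thesis using orth by (simp add: lin_fun_sum lin_fun_smult)
qed

lemma SMOP_orth_monoms_imp_eq_0:
  assumes sm: "is_SMOP m Q" and R: "\<forall>j\<ge>n. coeff R j = 0"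
    and orth: "\<forall>j<n. lin_fun m (R * monom 1 j) = 0"
  shows "R = 0"
proof (rule ccontr)
  assume "R \<noteq> 0"
  define d where "d = degree R"
  have lc: "coeff R d \<noteq> 0" using \<open>R \<noteq> 0\<close> unfolding d_def by simp
  then have "d < n" using R by (meson not_le)
  then have "\<forall>j\<ge>n. coeff (Q d) j = 0"
    using is_SMOP_monic_basis[OF sm] unfolding monic_basis_def by auto
  from lin_fun_mult_eq_0_if_orth_monoms[OF orth this] have "lin_fun m (Q d * R) = 0"
    by (simp add: mult.commute)
  moreover have "lin_fun m (Q d * R) = coeff R d * lin_fun m (Q d * Q d)"
    by (rule SMOP_orth_top[OF sm]) (simp add: d_def coeff_eq_0)
  ultimately show False using lc sm unfolding is_SMOP_def by simp
qed

lemma is_SMOP_intro_monoms: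
  assumes Q: "monic_basis Q"
    and orth: "\<And>n j. j < n \<Longrightarrow> lin_fun m (Q n * monom 1 j) = 0"
    and nz: "\<And>n. lin_fun m (Q n * monom 1 n) \<noteq> 0"
  shows "is_SMOP m Q"
proof -
  have deg: "degree (Q n) = n" for n
    using Q unfolding monic_basis_def by (metis antisym degree_le le_degree zero_neq_one)
  have lower: "lin_fun m (Q n * p) = 0" if "\<forall>j\<ge>n. coeff p j = 0" for n p
    using lin_fun_mult_eq_0_if_orth_monoms[of n m "Q n" p] orth that by blast
  have "lin_fun m (Q n * Q k) = 0" if "k < n" for n k
    using Q that unfolding monic_basis_def by (intro lower) auto
  then have pairs: "lin_fun m (Q n * Q k) = 0" if "n \<noteq> k" for n k
    using that by (metis linorder_neqE_nat mult.commute)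
  have "lin_fun m (Q n * Q n) \<noteq> 0" for n
  proof -
    have "\<forall>j\<ge>n. coeff (Q n - monom 1 n) j = 0"
      using Q unfolding monic_basis_def by (auto simp: coeff_monom le_less)
    from lower[OF this] show ?thesis
      using nz by (simp add: right_diff_distrib lin_fun_diff)
  qed
  then show ?thesis unfolding is_SMOP_def using deg Q pairs by (simp add: monic_basis_def)
qed

lemma SMOP_two_term_expansion:
  assumes sm: "is_SMOP m Q" and R: "\<forall>j>Suc n. coeff R j = 0"
    and orth: "\<forall>j<n. lin_fun m (R * monom 1 j) = 0"
  obtains c1 c0 where "R = smult c1 (Q (Suc n)) + smult c0 (Q n)"
proof -
  have Q: "monic_basis Q" by (rule is_SMOP_monic_basis[OF sm])
  define c1 where "c1 = coeff R (Suc n)"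
  define c0 where "c0 = coeff (R - smult c1 (Q (Suc n))) n"
  define T where "T = R - smult c1 (Q (Suc n)) - smult c0 (Q n)"
  have "\<forall>j\<ge>n. coeff T j = 0"
  proof (intro allI impI)
    fix j assume "n \<le> j"
    then consider "j = n" | "j = Suc n" | "j > Suc n" by linarith
    then show "coeff T j = 0"
      using R Q unfolding T_def c0_def c1_def monic_basis_def by cases auto
  qed
  moreover have "\<forall>j<n. lin_fun m (T * monom 1 j) = 0"
  proof (intro allI impI)
    fix j assume j: "j < n"
    have "lin_fun m (Q k * monom 1 j) = 0" if "n \<le> k" for k
      using j that by (intro SMOP_orth_lower[OF sm]) (auto simp: coeff_monom)
    then show "lin_fun m (T * monom 1 j) = 0"
      using orth j unfolding T_def by (simp add: left_diff_distrib lin_fun_diff lin_fun_smult)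
  qed
  ultimately have "T = 0" by (rule SMOP_orth_monoms_imp_eq_0[OF sm])
  then show ?thesis using that[of c1 c0] unfolding T_def by (simp add: diff_diff_eq)
qed

section \<open>Wronskians at the origin\<close>

lemma W0_coeff: "W0 p q = coeff p 0 * coeff q 1 - coeff p 1 * coeff q 0"
  by (simp add: W0_def wronskian_def poly_0_coeff_0 coeff_mult_0 coeff_pderiv)

lemma W0_swap: "W0 p q = - W0 q p"
  by (simp add: W0_coeff)

lemma pCons_0_pCons_0_factor:
  assumes "coeff p 0 = 0" "coeff p 1 = 0"
  obtains q where "p = pCons 0 (pCons 0 q)"
proof -
  obtain c p1 where p: "p = pCons c p1" by (rule pCons_cases)
  obtain d q where p1: "p1 = pCons d q" by (rule pCons_cases)
  show ?thesis using assms that[of q] unfolding p p1 by simp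
qed

lemma W0_eq_0_imp_combination:
  assumes "W0 p q = 0"
  obtains s t where "s \<noteq> 0 \<or> t \<noteq> 0"
    "coeff (smult s p + smult t q) 0 = 0" "coeff (smult s p + smult t q) 1 = 0"
proof -
  consider "coeff q 0 \<noteq> 0 \<or> coeff p 0 \<noteq> 0" | "coeff q 1 \<noteq> 0 \<or> coeff p 1 \<noteq> 0"
    | "coeff p 0 = 0" "coeff p 1 = 0" by blast
  then show ?thesis
  proof cases
    case 1
    then show ?thesis
      using assms that[of "coeff q 0" "- coeff p 0"] by (simp add: W0_coeff algebra_simps)
  next
    case 2
    then show ?thesis
      using assms that[of "coeff q 1" "- coeff p 1"] by (simp add: W0_coeff algebra_simps)
  next
    case 3
    then show ?thesis using that[of 1 0] by simp
  qed
qed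

lemma W0_cramer:
  assumes D: "W0 p1 p0 \<noteq> 0"
    and e0: "coeff (r + smult c1 p1 + smult c0 p0) 0 = 0"
    and e1: "coeff (r + smult c1 p1 + smult c0 p0) 1 = 0"
  shows "c1 = - W0 r p0 / W0 p1 p0" "c0 = W0 r p1 / W0 p1 p0"
proof -
  have "c1 * W0 p1 p0 + W0 r p0 = coeff p0 1 * coeff (r + smult c1 p1 + smult c0 p0) 0
      - coeff p0 0 * coeff (r + smult c1 p1 + smult c0 p0) 1"
    by (simp add: W0_coeff algebra_simps)
  then have "c1 * W0 p1 p0 = - W0 r p0" unfolding e0 e1 by (simp add: eq_neg_iff_add_eq_0)
  then show "c1 = - W0 r p0 / W0 p1 p0" using D by (simp add: field_simps)
  have "c0 * W0 p1 p0 - W0 r p1 = coeff p1 0 * coeff (r + smult c1 p1 + smult c0 p0) 1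
      - coeff p1 1 * coeff (r + smult c1 p1 + smult c0 p0) 0"
    by (simp add: W0_coeff algebra_simps)
  then have "c0 * W0 p1 p0 = W0 r p1" unfolding e0 e1 by simp
  then show "c0 = W0 r p1 / W0 p1 p0" using D by (simp add: field_simps)
qed

section \<open>Banded infinite matrices\<close>

definition upper_bandwidth_le :: "inf_mat \<Rightarrow> nat \<Rightarrow> bool" where
  "upper_bandwidth_le M d \<longleftrightarrow> (\<forall>i k. i + d < k \<longrightarrow> M i k = 0)"

definition row_poly :: "inf_mat \<Rightarrow> (nat \<Rightarrow> complex poly) \<Rightarrow> nat \<Rightarrow> complex poly" where
  "row_poly M Q i = (\<Sum>k | M i k \<noteq> 0. smult (M i k) (Q k))"

lemma smult_sum_right: "smult c (\<Sum>i\<in>S. f i) = (\<Sum>i\<in>S. smult c (f i))"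
  by (induction S rule: infinite_finite_induct) (simp_all add: smult_add_right)

lemma sum_nonzero_row_eq_atMost:
  assumes "upper_bandwidth_le M d" "\<And>k. g 0 k = 0"
  shows "(\<Sum>k | M i k \<noteq> 0. g (M i k) k) = (\<Sum>k\<le>i + d. g (M i k) k)"
proof (rule sum.mono_neutral_left)
  show "{k. M i k \<noteq> 0} \<subseteq> {..i + d}"
    using assms(1) unfolding upper_bandwidth_le_def by (auto intro: leI)
qed (use assms(2) in auto)

lemma inf_mat_mult_atMost:
  "upper_bandwidth_le A d \<Longrightarrow> inf_mat_mult A B i j = (\<Sum>k\<le>i + d. A i k * B k j)"
  unfolding inf_mat_mult_def by (rule sum_nonzero_row_eq_atMost) simp_all

lemma row_poly_atMost:
  "upper_bandwidth_le M d \<Longrightarrow> row_poly M Q i = (\<Sum>k\<le>i + d. smult (M i k) (Q k))"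
  unfolding row_poly_def by (rule sum_nonzero_row_eq_atMost) simp_all

lemma upper_bandwidth_le_mult:
  assumes A: "upper_bandwidth_le A da" and B: "upper_bandwidth_le B db"
  shows "upper_bandwidth_le (inf_mat_mult A B) (da + db)"
  unfolding upper_bandwidth_le_def
proof (intro allI impI)
  fix i k assume "i + (da + db) < k"
  then show "inf_mat_mult A B i k = 0"
    using B unfolding inf_mat_mult_atMost[OF A] upper_bandwidth_le_def
    by (intro sum.neutral) auto
qed

lemma row_poly_mult:
  assumes A: "upper_bandwidth_le A da" and B: "upper_bandwidth_le B db"
    and rows: "\<And>l. row_poly B Q l = c * R l"
  shows "row_poly (inf_mat_mult A B) Q i = c * row_poly A R i"
proof -
  have "row_poly (inf_mat_mult A B) Q i
      = (\<Sum>k\<le>i + (da + db). \<Sum>l\<le>i + da. smult (A i l) (smult (B l k) (Q k)))"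
    unfolding row_poly_atMost[OF upper_bandwidth_le_mult[OF A B]] inf_mat_mult_atMost[OF A]
    by (simp add: smult_sum)
  also have "\<dots> = (\<Sum>l\<le>i + da. smult (A i l) (\<Sum>k\<le>i + (da + db). smult (B l k) (Q k)))"
    by (subst sum.swap) (simp add: smult_sum_right)
  also have "\<dots> = (\<Sum>l\<le>i + da. smult (A i l) (row_poly B Q l))"
  proof (intro sum.cong refl arg_cong[where f = "smult _"])
    fix l assume "l \<in> {..i + da}"
    then show "(\<Sum>k\<le>i + (da + db). smult (B l k) (Q k)) = row_poly B Q l"
      unfolding row_poly_atMost[OF B] using B
      by (intro sum.mono_neutral_right) (auto simp: upper_bandwidth_le_def)
  qed
  also have "\<dots> = c * row_poly A R i"
    unfolding rows row_poly_atMost[OF A] by (simp add: sum_distrib_left)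
  finally show ?thesis .
qed

lemma inf_mat_eq_if_row_polys_eq:
  assumes Q: "monic_basis Q" and M: "upper_bandwidth_le M d" and N: "upper_bandwidth_le N d"
    and rows: "\<And>i. row_poly M Q i = row_poly N Q i"
  shows "M = N"
proof (intro ext)
  fix i k
  show "M i k = N i k"
  proof (cases "k \<le> i + d")
    case True
    have "(\<Sum>k<Suc (i + d). smult (M i k) (Q k)) = (\<Sum>k<Suc (i + d). smult (N i k) (Q k))"
      using rows[of i] unfolding row_poly_atMost[OF M] row_poly_atMost[OF N] lessThan_Suc_atMost .
    from monic_basis_coeffs_unique[OF Q this] True show ?thesis by simp
  next
    case False
    then show ?thesis using M N by (simp add: upper_bandwidth_le_def)
  qed
qed

lemma upper_bandwidth_le_monic_jacobi: "upper_bandwidth_le (monic_jacobi aa bb) 1"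
  by (auto simp: upper_bandwidth_le_def monic_jacobi_def)

lemma upper_bandwidth_le_Lmat: "upper_bandwidth_le (Lmat P b) 0"
  by (auto simp: upper_bandwidth_le_def Lmat_def)

lemma upper_bandwidth_le_Umat: "upper_bandwidth_le (Umat Pm) 2"
  by (auto simp: upper_bandwidth_le_def Umat_def)

lemma sum_atMost_last3:
  assumes "\<forall>l<i. f l = 0"
  shows "(\<Sum>l\<le>Suc (Suc i). f l) = f i + f (Suc i) + f (Suc (Suc i))"
proof -
  have "(\<Sum>l<i. f l) = 0" using assms by simp
  then show ?thesis by (simp only: lessThan_Suc_atMost[symmetric] sum.lessThan_Suc) simp
qed

lemma row_poly_monic_jacobi:
  assumes "three_term Q aa bb"
  shows "row_poly (monic_jacobi aa bb) Q i = [:0, 1:] * Q i"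
proof (cases i)
  case 0
  then show ?thesis using assms
    by (simp add: row_poly_atMost[OF upper_bandwidth_le_monic_jacobi] monic_jacobi_def
        three_term_def)
next
  case (Suc k)
  have "row_poly (monic_jacobi aa bb) Q i
      = smult (aa (Suc k)) (Q k) + smult (bb (Suc k)) (Q (Suc k)) + Q (Suc (Suc k))"
    unfolding row_poly_atMost[OF upper_bandwidth_le_monic_jacobi] Suc Suc_eq_plus1[symmetric]
    by (subst sum_atMost_last3) (auto simp: monic_jacobi_def)
  then show ?thesis using assms Suc unfolding three_term_def by (simp add: algebra_simps)
qed

section \<open>The inverse functional and the associated polynomials\<close>

lemma inv_moments_conv:
  assumes "u 0 \<noteq> 0"
  shows "(\<Sum>k\<le>n. u k * inv_moments u (n - k)) = (if n = 0 then 1 else 0)"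
proof -
  define U where "U = Abs_fps u"
  have "fps_nth U 0 \<noteq> 0" using assms by (simp add: U_def)
  then have UV: "U * inverse U = 1" by (rule inverse_mult_eq_1')
  have conv: "\<forall>n. (\<Sum>k\<le>n. u k * fps_nth (inverse U) (n - k)) = (if n = 0 then 1 else 0)"
  proof
    fix n
    have "fps_nth (U * inverse U) n = (if n = 0 then 1 else 0)" using UV by simp
    then show "(\<Sum>k\<le>n. u k * fps_nth (inverse U) (n - k)) = (if n = 0 then 1 else 0)"
      by (simp add: fps_mult_nth U_def atLeast0AtMost)
  qed
  have unique: "v = fps_nth (inverse U)"
    if "\<forall>n. (\<Sum>k\<le>n. u k * v (n - k)) = (if n = 0 then 1 else 0)" for v
  proof -
    have "U * Abs_fps v = 1"
      using that by (intro fps_ext) (simp add: fps_mult_nth U_def atLeast0AtMost)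
    then have "inverse U = Abs_fps v" by (rule fps_inverse_unique)
    then show ?thesis by (simp add: fun_eq_iff)
  qed
  have "inv_moments u = fps_nth (inverse U)"
    unfolding inv_moments_def by (rule the_equality) (rule conv, erule unique)
  with conv show ?thesis by simp
qed

primrec reversed_moments_poly :: "(nat \<Rightarrow> complex) \<Rightarrow> nat \<Rightarrow> complex poly" where
  "reversed_moments_poly v 0 = [:v 0:]"
| "reversed_moments_poly v (Suc k) = pCons (v (Suc k)) (reversed_moments_poly v k)"

declare reversed_moments_poly.simps(2) [simp del]

lemma coeff_reversed_moments_poly:
  "coeff (reversed_moments_poly v k) j = (if j \<le> k then v (k - j) else 0)"
  by (induction k arbitrary: j)
    (auto simp: reversed_moments_poly.simps(2) coeff_pCons split: nat.split)

lemma X_mult_reversed_moments_poly: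
  "[:0, 1:] * reversed_moments_poly v k = reversed_moments_poly v (Suc k) - [:v (Suc k):]"
  by (simp add: reversed_moments_poly.simps(2) poly_eq_iff coeff_pCons split: nat.split)

definition assoc1_prev :: "(nat \<Rightarrow> complex) \<Rightarrow> (nat \<Rightarrow> complex) \<Rightarrow> nat \<Rightarrow> complex poly" where
  "assoc1_prev a b k = (case k of 0 \<Rightarrow> 0 | Suc j \<Rightarrow> assoc1 a b j)"

lemma assoc1_prev_simps [simp]: "assoc1_prev a b 0 = 0" "assoc1_prev a b (Suc j) = assoc1 a b j"
  by (simp_all add: assoc1_prev_def)

lemma assoc1_prev_Suc_Suc:
  "assoc1_prev a b (Suc (Suc k)) = [:0, 1:] * assoc1_prev a b (Suc k)
     - smult (b (Suc k)) (assoc1_prev a b (Suc k)) - smult (a (Suc k)) (assoc1_prev a b k)"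
  by (cases k) (simp_all add: algebra_simps)

lemma X_mult_assoc1_prev_Suc_Suc:
  "[:0, 1:] * assoc1_prev a b (Suc (Suc k)) = [:0, 1:] * ([:0, 1:] * assoc1_prev a b (Suc k))
     - smult (b (Suc k)) ([:0, 1:] * assoc1_prev a b (Suc k))
     - smult (a (Suc k)) ([:0, 1:] * assoc1_prev a b k)"
  by (subst assoc1_prev_Suc_Suc) (simp add: algebra_simps)

declare assoc1.simps(3) [simp del]

locale smop_recurrence =
  fixes u :: "nat \<Rightarrow> complex" and P :: "nat \<Rightarrow> complex poly" and a b :: "nat \<Rightarrow> complex"
  assumes smop: "is_SMOP u P" and rec: "three_term P a b"
begin

abbreviation v :: "nat \<Rightarrow> complex" where "v \<equiv> inv_moments u"
abbreviation w :: "nat \<Rightarrow> complex" where "w \<equiv> \<lambda>k. inv_moments u (Suc (Suc k))"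

lemma P_0: "P 0 = 1"
  by (rule is_SMOP_0[OF smop])

lemma P_1: "P (Suc 0) = [:- b 0, 1:]"
  by (rule three_term_1[OF rec P_0])

lemmas P_Suc_Suc = three_term_Suc_Suc[OF rec]

lemma u_0_nonzero: "u 0 \<noteq> 0"
  using smop P_0 unfolding is_SMOP_def by (metis lin_fun_const mult_1 mult_1_left one_pCons)

lemma lin_fun_P_Suc: "lin_fun u (P (Suc k)) = 0"
  using smop P_0 unfolding is_SMOP_def by (metis mult_1_right nat.distinct(1))

lemma inv_conv: "(\<Sum>k\<le>n. u k * v (n - k)) = (if n = 0 then 1 else 0)"
  by (rule inv_moments_conv[of u, OF u_0_nonzero])

lemma inv_conv_0: "u 0 * v 0 = 1"
  using inv_conv[of 0] by simp

lemma lin_fun_reversed_moments_poly: "lin_fun u (reversed_moments_poly v k) = (if k = 0 then 1 else 0)"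
proof -
  have "\<forall>j\<ge>Suc k. coeff (reversed_moments_poly v k) j = 0"
    by (simp add: coeff_reversed_moments_poly)
  then have "lin_fun u (reversed_moments_poly v k)
      = (\<Sum>j<Suc k. coeff (reversed_moments_poly v k) j * u j)"
    by (rule lin_fun_eq_sum)
  also have "\<dots> = (\<Sum>j\<le>k. v (k - j) * u j)"
    by (simp add: coeff_reversed_moments_poly lessThan_Suc_atMost)
  finally show ?thesis
    using inv_conv[of k] by (simp add: mult.commute)
qed

lemma lin_fun_w_assoc1_prev_monom:
  "u 0 * lin_fun w (assoc1_prev a b k * monom 1 m)
    = - lin_fun u (P k * reversed_moments_poly v (Suc m))"
proof (induction k arbitrary: m rule: induct_nat_012)
  case 0
  then show ?case by (simp add: P_0 lin_fun_reversed_moments_poly)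
next
  case 1
  have "P (Suc 0) * reversed_moments_poly v (Suc m) = reversed_moments_poly v (Suc (Suc m))
      - [:v (Suc (Suc m)):] - smult (b 0) (reversed_moments_poly v (Suc m))"
    unfolding P_1 by (subst X_mult_reversed_moments_poly[symmetric]) (simp add: algebra_simps)
  then show ?case
    by (simp add: lin_fun_monom lin_fun_diff lin_fun_smult lin_fun_reversed_moments_poly)
next
  case (ge2 n)
  let ?R = "reversed_moments_poly v"
  have assoc1_step: "assoc1_prev a b (Suc (Suc n)) * monom 1 m
      = assoc1_prev a b (Suc n) * monom 1 (Suc m)
      - smult (b (Suc n)) (assoc1_prev a b (Suc n) * monom 1 m)
      - smult (a (Suc n)) (assoc1_prev a b n * monom 1 m)"
    by (subst assoc1_prev_Suc_Suc) (simp add: monom_Suc_X algebra_simps)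
  have R_shift: "P (Suc n) * ?R (Suc (Suc m))
      = P (Suc n) * ([:0, 1:] * ?R (Suc m)) + smult (v (Suc (Suc m))) (P (Suc n))"
    by (subst X_mult_reversed_moments_poly) (simp add: algebra_simps)
  have P_step: "P (Suc (Suc n)) * ?R (Suc m) = P (Suc n) * ?R (Suc (Suc m))
      - smult (v (Suc (Suc m))) (P (Suc n)) - smult (b (Suc n)) (P (Suc n) * ?R (Suc m))
      - smult (a (Suc n)) (P n * ?R (Suc m))"
    unfolding R_shift by (subst P_Suc_Suc) (simp add: algebra_simps)
  have "u 0 * lin_fun w (assoc1_prev a b (Suc (Suc n)) * monom 1 m)
     = u 0 * lin_fun w (assoc1_prev a b (Suc n) * monom 1 (Suc m))
       - b (Suc n) * (u 0 * lin_fun w (assoc1_prev a b (Suc n) * monom 1 m))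
       - a (Suc n) * (u 0 * lin_fun w (assoc1_prev a b n * monom 1 m))"
    unfolding assoc1_step lin_fun_diff lin_fun_smult by (simp add: algebra_simps)
  also have "\<dots> = - lin_fun u (P (Suc n) * ?R (Suc (Suc m)))
       + b (Suc n) * lin_fun u (P (Suc n) * ?R (Suc m)) + a (Suc n) * lin_fun u (P n * ?R (Suc m))"
    using ge2 by simp
  also have "\<dots> = - lin_fun u (P (Suc (Suc n)) * ?R (Suc m))"
    unfolding P_step lin_fun_diff lin_fun_smult by (simp add: lin_fun_P_Suc algebra_simps)
  finally show ?case .
qed

lemma lin_fun_v_X_assoc1_prev:
  "u 0 * lin_fun v ([:0, 1:] * assoc1_prev a b k) = coeff (P k) 0 - v 0 * lin_fun u (P k)"
proof (induction k rule: induct_nat_012)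
  case 0
  then show ?case using inv_conv_0 by (simp add: P_0 mult.commute)
next
  case 1
  have "u 0 * v (Suc 0) + u (Suc 0) * v 0 = 0"
    using inv_conv[of 1] by (simp add: numeral_eq_Suc)
  then show ?case
    using inv_conv_0 by (simp add: P_1 lin_fun_linear algebra_simps add_eq_0_iff)
next
  case (ge2 n)
  have "reversed_moments_poly v (Suc 0) = [:v (Suc 0), v 0:]"
    by (simp add: reversed_moments_poly.simps(2))
  moreover have "P (Suc n) * [:v (Suc 0), v 0:]
      = smult (v (Suc 0)) (P (Suc n)) + smult (v 0) ([:0, 1:] * P (Suc n))"
    by (simp add: algebra_simps)
  ultimately have w_assoc1: "u 0 * lin_fun w (assoc1_prev a b (Suc n))
      = - v (Suc 0) * lin_fun u (P (Suc n)) - v 0 * lin_fun u ([:0, 1:] * P (Suc n))"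
    using lin_fun_w_assoc1_prev_monom[of "Suc n" 0]
    by (simp add: lin_fun_add lin_fun_smult lin_fun_pCons_0)
  have "u 0 * lin_fun v ([:0, 1:] * assoc1_prev a b (Suc (Suc n)))
     = u 0 * lin_fun w (assoc1_prev a b (Suc n))
       - b (Suc n) * (u 0 * lin_fun v ([:0, 1:] * assoc1_prev a b (Suc n)))
       - a (Suc n) * (u 0 * lin_fun v ([:0, 1:] * assoc1_prev a b n))"
    unfolding X_mult_assoc1_prev_Suc_Suc lin_fun_diff lin_fun_smult lin_fun_mult_X
    by (simp add: algebra_simps)
  also have "\<dots> = - v 0 * lin_fun u ([:0, 1:] * P (Suc n)) - b (Suc n) * coeff (P (Suc n)) 0
       - a (Suc n) * (coeff (P n) 0 - v 0 * lin_fun u (P n))"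
    unfolding w_assoc1 ge2 by (simp add: lin_fun_P_Suc)
  also have "\<dots> = coeff (P (Suc (Suc n))) 0 - v 0 * lin_fun u (P (Suc (Suc n)))"
    by (subst (1 2) P_Suc_Suc, simp only: lin_fun_diff lin_fun_smult)
      (simp add: lin_fun_P_Suc algebra_simps)
  finally show ?case .
qed

lemma lin_fun_v_assoc1_prev: "u 0 * lin_fun v (assoc1_prev a b k) = coeff (P k) (Suc 0)"
proof (induction k rule: induct_nat_012)
  case (ge2 n)
  have "u 0 * lin_fun v (assoc1_prev a b (Suc (Suc n)))
     = u 0 * lin_fun v ([:0, 1:] * assoc1_prev a b (Suc n))
       - b (Suc n) * (u 0 * lin_fun v (assoc1_prev a b (Suc n)))
       - a (Suc n) * (u 0 * lin_fun v (assoc1_prev a b n))"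
    by (subst assoc1_prev_Suc_Suc, simp only: lin_fun_diff lin_fun_smult) (simp add: algebra_simps)
  also have "\<dots> = coeff (P (Suc (Suc n))) (Suc 0)"
    unfolding lin_fun_v_X_assoc1_prev ge2 by (subst P_Suc_Suc) (simp add: lin_fun_P_Suc)
  finally show ?case .
qed (simp_all add: P_0 P_1 inv_conv_0)

lemma lin_fun_w_assoc1_orth: "j < n \<Longrightarrow> lin_fun w (assoc1 a b n * monom 1 j) = 0"
  using SMOP_orth_lower[OF smop, of "Suc n" "reversed_moments_poly v (Suc j)"]
    lin_fun_w_assoc1_prev_monom[of "Suc n" j] u_0_nonzero
  by (simp add: coeff_reversed_moments_poly)

theorem is_SMOP_assoc1: "is_SMOP w (assoc1 a b)"
proof (rule is_SMOP_intro_monoms)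
  show "monic_basis (assoc1 a b)"
    using three_term_monic_basis[OF three_term_assoc1] by simp
  show "lin_fun w (assoc1 a b n * monom 1 j) = 0" if "j < n" for n j
    using that by (rule lin_fun_w_assoc1_orth)
  show "lin_fun w (assoc1 a b n * monom 1 n) \<noteq> 0" for n
  proof -
    have "lin_fun u (P (Suc n) * reversed_moments_poly v (Suc n))
        = v 0 * lin_fun u (P (Suc n) * P (Suc n))"
      by (subst SMOP_orth_top[OF smop]) (simp_all add: coeff_reversed_moments_poly)
    moreover have "lin_fun u (P (Suc n) * P (Suc n)) \<noteq> 0" "v 0 \<noteq> 0"
      using smop inv_conv_0 unfolding is_SMOP_def by auto
    ultimately show ?thesis using lin_fun_w_assoc1_prev_monom[of "Suc n" n] by auto
  qed
qed

lemma lin_fun_v_assoc1: "u 0 * lin_fun v (assoc1 a b n) = coeff (P (Suc n)) 1"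
  using lin_fun_v_assoc1_prev[of "Suc n"] by simp

lemma lin_fun_v_X_assoc1: "u 0 * lin_fun v ([:0, 1:] * assoc1 a b n) = coeff (P (Suc n)) 0"
  using lin_fun_v_X_assoc1_prev[of "Suc n"] by (simp add: lin_fun_P_Suc)

end

locale inverse_smop = smop_recurrence +
  fixes Pm :: "nat \<Rightarrow> complex poly"
  assumes smop_inv: "is_SMOP (inv_moments u) Pm"
begin

lemma Pm_0: "Pm 0 = 1"
  by (rule is_SMOP_0[OF smop_inv])

lemma lin_fun_v_Pm_Suc: "lin_fun v (Pm (Suc k)) = 0"
  using smop_inv Pm_0 unfolding is_SMOP_def by (metis mult_1_right nat.distinct(1))

lemma lin_fun_v_X_Pm_Suc_Suc: "lin_fun v ([:0, 1:] * Pm (Suc (Suc k))) = 0"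
  using SMOP_orth_lower[OF smop_inv, of "Suc (Suc k)" "[:0, 1:]"]
  by (simp add: coeff_pCons mult.commute split: nat.split)

lemma lin_fun_v_assoc1_comb_monom:
  assumes c0: "coeff (smult s (P (Suc (Suc k))) + smult t (P (Suc k))) 0 = 0"
    and c1: "coeff (smult s (P (Suc (Suc k))) + smult t (P (Suc k))) 1 = 0"
    and j: "j < Suc (Suc k)"
  shows "lin_fun v ((smult s (assoc1 a b (Suc k)) + smult t (assoc1 a b k)) * monom 1 j) = 0"
proof -
  let ?q = "smult s (assoc1 a b (Suc k)) + smult t (assoc1 a b k)"
  consider "j = 0" | "j = Suc 0" | i where "j = Suc (Suc i)" "i < k"
    using j by (metis less_Suc_eq_0_disj Suc_less_SucD)
  then show ?thesis
  proof cases
    case 1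
    have "u 0 * lin_fun v ?q = s * (u 0 * lin_fun v (assoc1 a b (Suc k)))
        + t * (u 0 * lin_fun v (assoc1 a b k))"
      unfolding lin_fun_add lin_fun_smult by (simp add: algebra_simps)
    also have "\<dots> = 0" unfolding lin_fun_v_assoc1 using c1 by simp
    finally show ?thesis using 1 u_0_nonzero by simp
  next
    case 2
    have "u 0 * lin_fun v ([:0, 1:] * ?q) = s * (u 0 * lin_fun v ([:0, 1:] * assoc1 a b (Suc k)))
        + t * (u 0 * lin_fun v ([:0, 1:] * assoc1 a b k))"
      unfolding distrib_left mult_smult_right lin_fun_add lin_fun_smult
      by (simp add: algebra_simps)
    also have "\<dots> = 0" unfolding lin_fun_v_X_assoc1 using c0 by simp
    finally show ?thesis using 2 u_0_nonzero by (simp add: monom_Suc_X mult.commute)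
  next
    case 3
    have "lin_fun v (?q * monom 1 j) = lin_fun w (?q * monom 1 i)"
      unfolding 3 monom_Suc by (simp add: lin_fun_pCons_0)
    then show ?thesis
      using lin_fun_w_assoc1_orth[of i "Suc k"] lin_fun_w_assoc1_orth[of i k] 3
      by (simp add: distrib_right lin_fun_add lin_fun_smult)
  qed
qed

theorem W0_P_nonzero: "W0 (P (Suc (Suc k))) (P (Suc k)) \<noteq> 0"
proof
  assume "W0 (P (Suc (Suc k))) (P (Suc k)) = 0"
  then obtain s t where st: "s \<noteq> 0 \<or> t \<noteq> 0"
    "coeff (smult s (P (Suc (Suc k))) + smult t (P (Suc k))) 0 = 0"
    "coeff (smult s (P (Suc (Suc k))) + smult t (P (Suc k))) 1 = 0"
    by (rule W0_eq_0_imp_combination)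
  define q where "q = smult s (assoc1 a b (Suc k)) + smult t (assoc1 a b k)"
  have A: "monic_basis (assoc1 a b)" by (rule is_SMOP_monic_basis[OF is_SMOP_assoc1])
  have "q = 0"
  proof (rule SMOP_orth_monoms_imp_eq_0[OF smop_inv, of "Suc (Suc k)"])
    show "\<forall>j\<ge>Suc (Suc k). coeff q j = 0" using A unfolding monic_basis_def q_def by auto
    show "\<forall>j<Suc (Suc k). lin_fun v (q * monom 1 j) = 0"
      using lin_fun_v_assoc1_comb_monom[OF st(2,3)] unfolding q_def by blast
  qed
  moreover have "coeff q (Suc k) = s" "coeff q k = s * coeff (assoc1 a b (Suc k)) k + t"
    using A unfolding monic_basis_def q_def by simp_all
  ultimately show False using st(1) by simp
qed

theorem W0_Pm_nonzero: "W0 (Pm n) (Pm (Suc n)) \<noteq> 0"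
proof
  assume "W0 (Pm n) (Pm (Suc n)) = 0"
  then obtain s t where st: "s \<noteq> 0 \<or> t \<noteq> 0"
    "coeff (smult s (Pm n) + smult t (Pm (Suc n))) 0 = 0"
    "coeff (smult s (Pm n) + smult t (Pm (Suc n))) 1 = 0"
    by (rule W0_eq_0_imp_combination)
  define T where "T = smult s (Pm n) + smult t (Pm (Suc n))"
  obtain q where q: "T = pCons 0 (pCons 0 q)"
    using pCons_0_pCons_0_factor[of T] st(2,3) unfolding T_def by blast
  have Pm: "monic_basis Pm" by (rule is_SMOP_monic_basis[OF smop_inv])
  have "q = 0"
  proof (rule SMOP_orth_monoms_imp_eq_0[OF is_SMOP_assoc1, of n])
    have "coeff q i = coeff T (Suc (Suc i))" for i unfolding q by simp
    then show "\<forall>j\<ge>n. coeff q j = 0" using Pm unfolding monic_basis_def T_def by simp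
    show "\<forall>j<n. lin_fun w (q * monom 1 j) = 0"
    proof (intro allI impI)
      fix j assume j: "j < n"
      have orth: "lin_fun v (Pm l * monom 1 j) = 0" if "n \<le> l" for l
        using j that by (intro SMOP_orth_lower[OF smop_inv]) (simp add: coeff_monom)
      have "lin_fun w (q * monom 1 j) = lin_fun v (T * monom 1 j)"
        unfolding q by (simp add: lin_fun_pCons_0)
      then show "lin_fun w (q * monom 1 j) = 0"
        using orth[of n] orth[of "Suc n"]
        unfolding T_def by (simp add: distrib_right lin_fun_add lin_fun_smult)
    qed
  qed
  then have "T = 0" unfolding q by simp
  moreover have "coeff T (Suc n) = t" "coeff T n = s + t * coeff (Pm (Suc n)) n"
    using Pm unfolding monic_basis_def T_def by simp_all
  ultimately show False using st(1) by simp
qed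

lemma Pm_1: "Pm 1 = assoc1 a b 1 + smult (alpha1 P b 1) (assoc1 a b 0)"
proof -
  define c where "c = coeff (Pm (Suc 0)) 0 + b 1"
  have Pm1: "Pm (Suc 0) = assoc1 a b (Suc 0) + [:c:]"
    using is_SMOP_monic_basis[OF smop_inv] unfolding monic_basis_def
    by (auto simp: poly_eq_iff c_def coeff_pCons split: nat.split)
  have "0 = u 0 * lin_fun v (Pm (Suc 0))" using lin_fun_v_Pm_Suc[of 0] by simp
  also have "\<dots> = u 0 * lin_fun v (assoc1 a b (Suc 0)) + c * (u 0 * v 0)"
    unfolding Pm1 lin_fun_add lin_fun_const
    by (simp add: distrib_left mult.left_commute del: assoc1.simps(2))
  also have "\<dots> = c - b 0 - b 1"
    unfolding lin_fun_v_assoc1 inv_conv_0 by (simp add: numeral_2_eq_2 P_Suc_Suc P_1 P_0)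
  finally have "c = b 0 + b 1" by (simp add: algebra_simps)
  then show ?thesis using Pm1 by (simp add: alpha1_def)
qed

lemma Pm_Suc_Suc_three_term:
  obtains c1 c0 where "Pm (Suc (Suc k))
    = assoc1 a b (Suc (Suc k)) + smult c1 (assoc1 a b (Suc k)) + smult c0 (assoc1 a b k)"
proof -
  have Pm: "monic_basis Pm" by (rule is_SMOP_monic_basis[OF smop_inv])
  have A: "monic_basis (assoc1 a b)" by (rule is_SMOP_monic_basis[OF is_SMOP_assoc1])
  define R where "R = Pm (Suc (Suc k)) - assoc1 a b (Suc (Suc k))"
  obtain c1 c0 where "R = smult c1 (assoc1 a b (Suc k)) + smult c0 (assoc1 a b k)"
  proof (rule SMOP_two_term_expansion[OF is_SMOP_assoc1])
    show "\<forall>j>Suc k. coeff R j = 0"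
      using Pm A unfolding monic_basis_def R_def by (metis Suc_lessI coeff_diff diff_self)
    show "\<forall>j<k. lin_fun w (R * monom 1 j) = 0"
    proof (intro allI impI)
      fix j assume j: "j < k"
      have "lin_fun w (Pm (Suc (Suc k)) * monom 1 j)
          = lin_fun v (Pm (Suc (Suc k)) * monom 1 (Suc (Suc j)))"
        by (simp add: monom_Suc lin_fun_pCons_0)
      also have "\<dots> = 0" using j by (intro SMOP_orth_lower[OF smop_inv]) (simp add: coeff_monom)
      finally show "lin_fun w (R * monom 1 j) = 0"
        unfolding R_def left_diff_distrib lin_fun_diff
        using lin_fun_w_assoc1_orth[of j "Suc (Suc k)"] j by simp
    qed
  qed
  then show ?thesis using that unfolding R_def by (simp add: algebra_simps)
qed

theorem Pm_Suc_Suc: "Pm (Suc (Suc k)) = assoc1 a b (Suc (Suc k))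
   + smult (alpha1 P b (Suc (Suc k))) (assoc1 a b (Suc k))
   + smult (alpha2 P (Suc (Suc k))) (assoc1 a b k)"
proof -
  obtain c1 c0 where Pe: "Pm (Suc (Suc k))
    = assoc1 a b (Suc (Suc k)) + smult c1 (assoc1 a b (Suc k)) + smult c0 (assoc1 a b k)"
    by (rule Pm_Suc_Suc_three_term)
  define E where "E = P (Suc (Suc (Suc k))) + smult c1 (P (Suc (Suc k))) + smult c0 (P (Suc k))"
  have "0 = u 0 * lin_fun v ([:0, 1:] * Pm (Suc (Suc k)))"
    by (simp only: lin_fun_v_X_Pm_Suc_Suc mult_zero_right)
  also have "\<dots> = u 0 * lin_fun v ([:0, 1:] * assoc1 a b (Suc (Suc k)))
      + c1 * (u 0 * lin_fun v ([:0, 1:] * assoc1 a b (Suc k)))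
      + c0 * (u 0 * lin_fun v ([:0, 1:] * assoc1 a b k))"
    unfolding Pe distrib_left mult_smult_right lin_fun_add lin_fun_smult
    by (simp add: algebra_simps)
  also have "\<dots> = coeff E 0"
    unfolding lin_fun_v_X_assoc1 E_def by simp
  finally have e0: "coeff E 0 = 0" by simp
  have "0 = u 0 * lin_fun v (Pm (Suc (Suc k)))" by (simp add: lin_fun_v_Pm_Suc)
  also have "\<dots> = u 0 * lin_fun v (assoc1 a b (Suc (Suc k)))
      + c1 * (u 0 * lin_fun v (assoc1 a b (Suc k))) + c0 * (u 0 * lin_fun v (assoc1 a b k))"
    unfolding Pe lin_fun_add lin_fun_smult by (simp add: algebra_simps)
  also have "\<dots> = coeff E 1"
    unfolding lin_fun_v_assoc1 E_def by simp
  finally have e1: "coeff E 1 = 0" by simp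
  show ?thesis
    using Pe W0_cramer[OF W0_P_nonzero e0[unfolded E_def] e1[unfolded E_def]]
    by (simp add: alpha1_def alpha2_def)
qed

theorem X2_assoc1: "[:0, 0, 1:] * assoc1 a b n
    = Pm (n + 2) + smult (beta1 Pm n) (Pm (n + 1)) + smult (beta0 Pm n) (Pm n)"
proof -
  have Pm: "monic_basis Pm" by (rule is_SMOP_monic_basis[OF smop_inv])
  have A: "monic_basis (assoc1 a b)" by (rule is_SMOP_monic_basis[OF is_SMOP_assoc1])
  define R where "R = [:0, 1:] * ([:0, 1:] * assoc1 a b n) - Pm (Suc (Suc n))"
  obtain c1 c0 where "R = smult c1 (Pm (Suc n)) + smult c0 (Pm n)"
  proof (rule SMOP_two_term_expansion[OF smop_inv])
    show "\<forall>j>Suc n. coeff R j = 0"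
    proof (intro allI impI)
      fix j assume "Suc n < j"
      define i where "i = j - 2"
      have i: "j = Suc (Suc i)" "n \<le> i" using \<open>Suc n < j\<close> unfolding i_def by arith+
      then consider "i = n" | "i > n" by linarith
      then show "coeff R j = 0" using Pm A i unfolding monic_basis_def R_def by cases auto
    qed
    show "\<forall>j<n. lin_fun v (R * monom 1 j) = 0"
    proof (intro allI impI)
      fix j assume j: "j < n"
      have "lin_fun v ([:0, 1:] * ([:0, 1:] * assoc1 a b n) * monom 1 j)
          = lin_fun w (assoc1 a b n * monom 1 j)"
        by (simp only: mult.assoc lin_fun_mult_X)
      moreover have "lin_fun v (Pm (Suc (Suc n)) * monom 1 j) = 0"
        using j by (intro SMOP_orth_lower[OF smop_inv]) (simp add: coeff_monom)
      ultimately show "lin_fun v (R * monom 1 j) = 0"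
        using lin_fun_w_assoc1_orth[OF j] unfolding R_def left_diff_distrib lin_fun_diff by simp
    qed
  qed
  then have Pe: "[:0, 0, 1:] * assoc1 a b n
      = Pm (Suc (Suc n)) + smult c1 (Pm (Suc n)) + smult c0 (Pm n)"
    unfolding R_def by (simp add: algebra_simps)
  have e0: "coeff (Pm (Suc (Suc n)) + smult c1 (Pm (Suc n)) + smult c0 (Pm n)) 0 = 0"
    and e1: "coeff (Pm (Suc (Suc n)) + smult c1 (Pm (Suc n)) + smult c0 (Pm n)) 1 = 0"
    unfolding Pe[symmetric] by simp_all
  have "W0 (Pm (Suc n)) (Pm n) \<noteq> 0" using W0_Pm_nonzero[of n] by (simp add: W0_swap[of "Pm n"])
  from W0_cramer[OF this e0 e1] show ?thesis
    using Pe by (simp add: beta0_def beta1_def W0_swap[of "Pm n"]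
        W0_swap[of "Pm (Suc n)" "Pm (Suc (Suc n))"])
qed

lemma row_poly_Lmat: "row_poly (Lmat P b) (assoc1 a b) i = Pm i"
proof -
  consider "i = 0" | "i = Suc 0" | k where "i = Suc (Suc k)" by (metis not0_implies_Suc)
  then show ?thesis
  proof cases
    case 1
    then show ?thesis by (simp add: row_poly_atMost[OF upper_bandwidth_le_Lmat] Lmat_def Pm_0)
  next
    case 2
    then show ?thesis using Pm_1 by (simp add: row_poly_atMost[OF upper_bandwidth_le_Lmat] Lmat_def)
  next
    case 3
    then show ?thesis unfolding 3 row_poly_atMost[OF upper_bandwidth_le_Lmat] add_0_right Pm_Suc_Suc
      by (subst sum_atMost_last3) (auto simp: Lmat_def algebra_simps)
  qed
qed

lemma row_poly_Umat: "row_poly (Umat Pm) Pm i = [:0, 0, 1:] * assoc1 a b i"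
proof -
  have "row_poly (Umat Pm) Pm i
      = smult (beta0 Pm i) (Pm i) + smult (beta1 Pm i) (Pm (Suc i)) + Pm (Suc (Suc i))"
    unfolding row_poly_atMost[OF upper_bandwidth_le_Umat] numeral_2_eq_2 add_Suc_right add_0_right
    by (subst sum_atMost_last3) (auto simp: Umat_def)
  then show ?thesis using X2_assoc1[of i] by (simp add: algebra_simps)
qed

theorem assoc1_jacobi_square:
  "inf_mat_mult (monic_jacobi (\<lambda>k. a (Suc k)) (\<lambda>k. b (Suc k)))
     (monic_jacobi (\<lambda>k. a (Suc k)) (\<lambda>k. b (Suc k))) = inf_mat_mult (Umat Pm) (Lmat P b)"
proof (rule inf_mat_eq_if_row_polys_eq[where d = 2, OF is_SMOP_monic_basis[OF is_SMOP_assoc1]])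
  show "upper_bandwidth_le (inf_mat_mult (monic_jacobi (\<lambda>k. a (Suc k)) (\<lambda>k. b (Suc k)))
     (monic_jacobi (\<lambda>k. a (Suc k)) (\<lambda>k. b (Suc k)))) 2"
    using upper_bandwidth_le_mult[OF upper_bandwidth_le_monic_jacobi upper_bandwidth_le_monic_jacobi]
    by (simp only: one_add_one)
  show "upper_bandwidth_le (inf_mat_mult (Umat Pm) (Lmat P b)) 2"
    using upper_bandwidth_le_mult[OF upper_bandwidth_le_Umat upper_bandwidth_le_Lmat]
    by (simp only: add_0_right)
  fix i
  show "row_poly (inf_mat_mult (monic_jacobi (\<lambda>k. a (Suc k)) (\<lambda>k. b (Suc k)))
     (monic_jacobi (\<lambda>k. a (Suc k)) (\<lambda>k. b (Suc k)))) (assoc1 a b) i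
    = row_poly (inf_mat_mult (Umat Pm) (Lmat P b)) (assoc1 a b) i"
    using row_poly_mult[OF upper_bandwidth_le_monic_jacobi upper_bandwidth_le_monic_jacobi
        row_poly_monic_jacobi[OF three_term_assoc1]]
      row_poly_mult[OF upper_bandwidth_le_Umat upper_bandwidth_le_Lmat, where c = 1 and R = Pm]
    by (simp add: row_poly_monic_jacobi[OF three_term_assoc1] row_poly_Lmat row_poly_Umat)
qed

theorem inverse_jacobi_square:
  assumes rec_inv: "three_term Pm am bm"
  shows "inf_mat_mult (monic_jacobi am bm) (monic_jacobi am bm) = inf_mat_mult (Lmat P b) (Umat Pm)"
proof (rule inf_mat_eq_if_row_polys_eq[where d = 2, OF is_SMOP_monic_basis[OF smop_inv]])
  show "upper_bandwidth_le (inf_mat_mult (monic_jacobi am bm) (monic_jacobi am bm)) 2"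
    using upper_bandwidth_le_mult[OF upper_bandwidth_le_monic_jacobi upper_bandwidth_le_monic_jacobi]
    by (simp only: one_add_one)
  show "upper_bandwidth_le (inf_mat_mult (Lmat P b) (Umat Pm)) 2"
    using upper_bandwidth_le_mult[OF upper_bandwidth_le_Lmat upper_bandwidth_le_Umat]
    by (simp only: add_0_left)
  fix i
  show "row_poly (inf_mat_mult (monic_jacobi am bm) (monic_jacobi am bm)) Pm i
    = row_poly (inf_mat_mult (Lmat P b) (Umat Pm)) Pm i"
    using row_poly_mult[OF upper_bandwidth_le_monic_jacobi upper_bandwidth_le_monic_jacobi
        row_poly_monic_jacobi[OF rec_inv]]
      row_poly_mult[OF upper_bandwidth_le_Lmat upper_bandwidth_le_Umat row_poly_Umat]
    by (simp add: row_poly_monic_jacobi[OF rec_inv] row_poly_Lmat)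
qed

end

theorem mainTheorem8:
  fixes u :: "nat \<Rightarrow> complex"
    and P Pm :: "nat \<Rightarrow> complex poly"
    and a b am bm :: "nat \<Rightarrow> complex"
  assumes qd: "quasi_definite u"
    and smop: "is_SMOP u P"
    and rec: "three_term P a b"
    and qd_inv: "quasi_definite (inv_moments u)"
    and smop_inv: "is_SMOP (inv_moments u) Pm"
    and rec_inv: "three_term Pm am bm"
  shows "(\<forall>n\<ge>2. W0 (P n) (P (n - 1)) \<noteq> 0)
    \<and> (\<forall>n. W0 (Pm n) (Pm (n + 1)) \<noteq> 0)
    \<and> Pm 0 = assoc1 a b 0
    \<and> Pm 1 = assoc1 a b 1 + smult (alpha1 P b 1) (assoc1 a b 0)
    \<and> (\<forall>n\<ge>2. Pm n = assoc1 a b n + smult (alpha1 P b n) (assoc1 a b (n - 1))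
                     + smult (alpha2 P n) (assoc1 a b (n - 2)))
    \<and> (\<forall>n. [:0, 0, 1:] * assoc1 a b n = Pm (n + 2) + smult (beta1 Pm n) (Pm (n + 1))
                     + smult (beta0 Pm n) (Pm n))
    \<and> inf_mat_mult (monic_jacobi (\<lambda>k. a (Suc k)) (\<lambda>k. b (Suc k)))
                   (monic_jacobi (\<lambda>k. a (Suc k)) (\<lambda>k. b (Suc k)))
        = inf_mat_mult (Umat Pm) (Lmat P b)
    \<and> inf_mat_mult (monic_jacobi am bm) (monic_jacobi am bm)
        = inf_mat_mult (Lmat P b) (Umat Pm)"
proof -
  interpret inverse_smop u P a b Pm
    using smop rec smop_inv by unfold_locales
  have "W0 (P n) (P (n - 1)) \<noteq> 0" if "2 \<le> n" for n
    using W0_P_nonzero[of "n - 2"] that by (simp add: Suc_diff_Suc numeral_2_eq_2)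
  moreover have "Pm n = assoc1 a b n + smult (alpha1 P b n) (assoc1 a b (n - 1))
      + smult (alpha2 P n) (assoc1 a b (n - 2))" if "2 \<le> n" for n
    using Pm_Suc_Suc[of "n - 2"] that by (simp add: Suc_diff_Suc numeral_2_eq_2)
  ultimately show ?thesis
    using W0_Pm_nonzero Pm_0 Pm_1 X2_assoc1 assoc1_jacobi_square inverse_jacobi_square[OF rec_inv]
    by simp
qed

end
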